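(* A generic $(2,3)$-hypersurface of type $(\tau)$, i.e. $\{a_1x_1^2y_0^2y_1+a_2x_0x_1y_0y_1y_2+a_3x_0^2y_1y_2^2=0\}$, and the hypersurface of type $(\tau')$, i.e. $\{x_0x_1y_0y_1y_2=0\}$, are semistable with closed orbit.
   Context: Coordinates $(x_0,x_1;y_0,y_1,y_2)$ on $\mathbb{P}^1\times\mathbb{P}^2$; (semi)stability and closedness of orbits refer to GIT for the natural action of $\mathrm{SL}_2\times\mathrm{SL}_3$ on $\mathbb{P}(H^0(\mathcal{O}(2,3)))$ (closed orbit meaning closed in the semistable locus). "Generic" refers to general constants $a_1,a_2,a_3$. *)

theory Defs
  imports "HOL-Analysis.Analysis"
begin

text \<open>Bihomogeneous forms of bidegree (2,3) on P^1 x P^2, viewed as polynomial functions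
  F x y with x = (x0,x1) = (x$1, x$2) and y = (y0,y1,y2) = (y$1, y$2, y$3).\<close>

type_synonym form = "complex^2 \<Rightarrow> complex^3 \<Rightarrow> complex"

definition form23 :: "form \<Rightarrow> bool" where
  "form23 F \<longleftrightarrow> (\<exists>c::nat \<Rightarrow> nat \<Rightarrow> nat \<Rightarrow> complex.
     F = (\<lambda>x y. \<Sum>i\<le>2. \<Sum>a\<le>3. \<Sum>b\<le>3 - a.
            c i a b * x$1 ^ i * x$2 ^ (2 - i) * y$1 ^ a * y$2 ^ b * y$3 ^ (3 - a - b)))"

text \<open>Action of (A,B) in SL2 x SL3 (by substitution; the orbit is the same set as for the
  contragredient action since SL is a group).\<close>
definition act :: "complex^2^2 \<Rightarrow> complex^3^3 \<Rightarrow> form \<Rightarrow> form" where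
  "act A B F = (\<lambda>x y. F (A *v x) (B *v y))"

definition SL_orbit :: "form \<Rightarrow> form set" where
  "SL_orbit F = {act A B F | A B. det A = 1 \<and> det B = 1}"

text \<open>Cone over the orbit of [F] in P(V): all nonzero multiples of orbit points.\<close>
definition cone_orbit :: "form \<Rightarrow> form set" where
  "cone_orbit F = {(\<lambda>x y. t * G x y) | t G. t \<noteq> 0 \<and> G \<in> SL_orbit F}"

text \<open>Euclidean closure in the finite-dimensional space V; on V pointwise convergence of the
  polynomial functions coincides with convergence of coefficients.\<close>
definition in_closure :: "form \<Rightarrow> form set \<Rightarrow> bool" where
  "in_closure H S \<longleftrightarrow> (\<exists>s::nat \<Rightarrow> form. (\<forall>n. s n \<in> S) \<and>
      (\<forall>x y. (\<lambda>n. s n x y) \<longlonglongrightarrow> H x y))"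

definition semistable :: "form \<Rightarrow> bool" where
  "semistable F \<longleftrightarrow> form23 F \<and> F \<noteq> (\<lambda>x y. 0) \<and> \<not> in_closure (\<lambda>x y. 0) (SL_orbit F)"

text \<open>The orbit of [F] is closed in the semistable locus of P(V): since V-{0} -> P(V) is an open
  quotient map, this says every semistable H in the closure of the cone over the orbit lies in it.\<close>
definition closed_orbit :: "form \<Rightarrow> bool" where
  "closed_orbit F \<longleftrightarrow> (\<forall>H. semistable H \<and> in_closure H (cone_orbit F) \<longrightarrow> H \<in> cone_orbit F)"

definition generic3 :: "(complex \<Rightarrow> complex \<Rightarrow> complex \<Rightarrow> bool) \<Rightarrow> bool" where
  "generic3 P \<longleftrightarrow> (\<exists>(p::nat \<Rightarrow> nat \<Rightarrow> nat \<Rightarrow> complex) N.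
     (\<exists>i j k. p i j k \<noteq> 0) \<and> (\<forall>i j k. p i j k \<noteq> 0 \<longrightarrow> i \<le> N \<and> j \<le> N \<and> k \<le> N) \<and>
     (\<forall>a1 a2 a3. (\<Sum>i\<le>N. \<Sum>j\<le>N. \<Sum>k\<le>N. p i j k * a1 ^ i * a2 ^ j * a3 ^ k) \<noteq> 0
        \<longrightarrow> P a1 a2 a3))"

definition tau :: "complex \<Rightarrow> complex \<Rightarrow> complex \<Rightarrow> form" where
  "tau a1 a2 a3 = (\<lambda>x y. a1 * x$2^2 * y$1^2 * y$2 + a2 * x$1 * x$2 * y$1 * y$2 * y$3
                        + a3 * x$1^2 * y$2 * y$3^2)"

definition tau' :: form where
  "tau' = (\<lambda>x y. x$1 * x$2 * y$1 * y$2 * y$3)"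

end

theory Submission
  imports Defs
begin

text \<open>
  Both forms are of the shape
  model_form al be ga de = y2 (al x2 y1 + be x1 y3) (ga x2 y1 + de x1 y3) with al de - be ga \<noteq> 0:
  type (tau) after factoring its quadratic part in (x2 y1, x1 y3), type (tau') for al = de = 1,
  be = ga = 0.

  Semistability: viewed as a binary quadratic in x, a point act A B F of the orbit has discriminant
  (al de - be ga)^2 times the square of the product of the three linear forms given by the rows of
  B \<in> SL3. Such products cannot tend to 0 pointwise: normalising the rows of B, a limit has
  nonzero rows, while the determinant of the normalised matrices stays bounded.

  Closedness: every point of the cone over the orbit is a product of a linear form in y and two
  bilinear forms whose matrices have a common kernel vector and satisfy a closed quadratic relation
  between the cross products of their rows. By compactness a nonzero limit H has the same shape.
  If H is semistable, moving the kernel vector and the linear factor to y2 writes H as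
  y2 l1 l2 with l1, l2 bilinear in x and (y1, y3), given by 2 x 2 matrices T1, T2, and the relation
  becomes al be ga de (mixed_det T1 T2)^2 = (al de + be ga)^2 det T1 det T2. When T1 or T2 is
  singular a one-parameter subgroup contracts H to 0, contradicting semistability; otherwise a
  simultaneous normal form of the pencil (T1, T2) exhibits H as a point of the cone over the orbit.
\<close>

definition cdot :: "complex^'n \<Rightarrow> complex^'n \<Rightarrow> complex" where
  "cdot u x = (\<Sum>i\<in>UNIV. u$i * x$i)"

definition bilin :: "complex^3^2 \<Rightarrow> complex^2 \<Rightarrow> complex^3 \<Rightarrow> complex" where
  "bilin N x y = (\<Sum>j\<in>UNIV. \<Sum>l\<in>UNIV. x$j * N$j$l * y$l)"

definition model_form :: "complex \<Rightarrow> complex \<Rightarrow> complex \<Rightarrow> complex \<Rightarrow> form" where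
  "model_form al be ga de =
     (\<lambda>x y. y$2 * (al * x$2 * y$1 + be * x$1 * y$3) * (ga * x$2 * y$1 + de * x$1 * y$3))"

lemma cdot_3: "cdot (u::complex^3) x = u$1 * x$1 + u$2 * x$2 + u$3 * x$3"
  by (simp add: cdot_def sum_3)

lemma bilin_expand:
  "bilin N x y = x$1 * N$1$1 * y$1 + x$1 * N$1$2 * y$2 + x$1 * N$1$3 * y$3
              + x$2 * N$2$1 * y$1 + x$2 * N$2$2 * y$2 + x$2 * N$2$3 * y$3"
  by (simp add: bilin_def sum_2 sum_3 algebra_simps)

lemma mult_vec_2: "((A::complex^2^2) *v x)$i = A$i$1 * x$1 + A$i$2 * x$2"
  by (simp add: matrix_vector_mult_def sum_2)

lemma mult_vec_3: "((A::complex^3^3) *v x)$i = A$i$1 * x$1 + A$i$2 * x$2 + A$i$3 * x$3"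
  by (simp add: matrix_vector_mult_def sum_3)

lemma mult_vec_nth_cdot: "(A *v x)$i = cdot (A$i) x"
  by (simp add: matrix_vector_mult_def cdot_def)

lemma model_form_homogeneous:
  "model_form al be ga de (c *s x) (d *s y) = c^2 * d^3 * model_form al be ga de x y"
  by (simp add: model_form_def power2_eq_square power3_eq_cube algebra_simps)

subsection \<open>The group action\<close>

lemma act_act: "act A B (act A' B' G) = act (A' ** A) (B' ** B) G"
  by (simp add: act_def matrix_vector_mul_assoc)

lemma act_mat_1: "act (mat 1) (mat 1) G = G"
  by (simp add: act_def)

lemma SL_right_inverse:
  fixes A :: "'a::field^'n^'n"
  assumes "det A = 1"
  obtains B where "det B = 1" "A ** B = mat 1"
proof -
  obtain B where B: "A ** B = mat 1"
    using assms invertible_det_nz invertible_right_inverse by (metis one_neq_zero)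
  then have "det A * det B = 1" by (metis det_I det_mul)
  with assms B show ?thesis using that by simp
qed

lemma act_in_SL_orbit:
  assumes "G \<in> SL_orbit H" "det A = 1" "det B = 1"
  shows "act A B G \<in> SL_orbit H"
proof -
  obtain A' B' where "G = act A' B' H" "det A' = 1" "det B' = 1"
    using assms(1) by (auto simp: SL_orbit_def)
  with assms(2,3) have "act A B G = act (A' ** A) (B' ** B) H"
    and "det (A' ** A) = 1" "det (B' ** B) = 1"
    by (simp_all add: act_act det_mul)
  then show ?thesis unfolding SL_orbit_def by blast
qed

lemma SL_orbit_subset:
  assumes "G \<in> SL_orbit H" shows "SL_orbit G \<subseteq> SL_orbit H"
  using act_in_SL_orbit[OF assms] by (auto simp: SL_orbit_def)

lemma act_in_cone_orbit:
  assumes "G \<in> cone_orbit F" "det A = 1" "det B = 1"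
  shows "act A B G \<in> cone_orbit F"
proof -
  obtain t K where "G = (\<lambda>x y. t * K x y)" "t \<noteq> 0" "K \<in> SL_orbit F"
    using assms(1) by (auto simp: cone_orbit_def)
  moreover from this have "act A B G = (\<lambda>x y. t * act A B K x y)" "act A B K \<in> SL_orbit F"
    using act_in_SL_orbit assms by (auto simp: act_def)
  ultimately show ?thesis unfolding cone_orbit_def by blast
qed

lemma act_in_cone_orbit_iff:
  assumes "det A = 1" "det B = 1"
  shows "act A B G \<in> cone_orbit F \<longleftrightarrow> G \<in> cone_orbit F"
proof
  obtain A' where A': "det A' = 1" "A ** A' = mat 1" using SL_right_inverse assms(1) .
  obtain B' where B': "det B' = 1" "B ** B' = mat 1" using SL_right_inverse assms(2) .
  assume "act A B G \<in> cone_orbit F"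
  then have "act A' B' (act A B G) \<in> cone_orbit F" using act_in_cone_orbit A' B' by blast
  then show "G \<in> cone_orbit F" by (simp add: act_act A' B' act_mat_1)
qed (use act_in_cone_orbit assms in blast)

text \<open>Up to the scalars of the cone, the orbit of a form of bidegree (2,3) is its GL2 x GL3 orbit:
  a square root of det A and a cube root of det B rescale A and B into SL, and by homogeneity the
  rescaling only changes the form by a scalar.\<close>

lemma complex_root_exists:
  assumes "(z::complex) \<noteq> 0" "n > 0" obtains w where "w ^ n = z"
proof
  show "exp (Ln z / of_nat n) ^ n = z"
    using assms by (simp add: exp_of_nat_mult[symmetric])
qed

lemma act_rescaled:
  fixes A :: "complex^2^2" and B :: "complex^3^3"
  assumes hom: "\<And>c d x y. F (c *s x) (d *s y) = c^2 * d^3 * F x y"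
  shows "act (\<chi> i. a *s A$i) (\<chi> i. b *s B$i) F = (\<lambda>x y. a^2 * b^3 * act A B F x y)"
proof -
  have scale: "(\<chi> i. c *s M$i) *v v = c *s (M *v v)" for c and M :: "complex^'n^'m" and v
    by (simp add: vec_eq_iff matrix_vector_mult_def sum_distrib_left mult.assoc)
  show ?thesis unfolding act_def scale hom ..
qed

lemma det_rescaled: "det (\<chi> i. c *s (A::complex^'n^'n)$i) = c ^ CARD('n) * det A"
  using det_rows_mul[of "\<lambda>_. c" "\<lambda>i. A$i"] by simp

lemma scaled_act_in_cone_orbit:
  fixes A :: "complex^2^2" and B :: "complex^3^3"
  assumes hom: "\<And>c d x y. F (c *s x) (d *s y) = c^2 * d^3 * F x y"
    and "det A \<noteq> 0" "det B \<noteq> 0" "t \<noteq> 0"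
  shows "(\<lambda>x y. t * act A B F x y) \<in> cone_orbit F"
proof -
  obtain a where a: "a^2 = 1 / det A"
    using complex_root_exists[of "1 / det A" 2] assms(2) by auto
  obtain b where b: "b^3 = 1 / det B"
    using complex_root_exists[of "1 / det B" 3] assms(3) by auto
  let ?A = "\<chi> i. a *s A$i" and ?B = "\<chi> i. b *s B$i"
  have "det ?A = 1" "det ?B = 1" using a b assms(2,3) by (simp_all add: det_rescaled)
  then have "act ?A ?B F \<in> SL_orbit F" unfolding SL_orbit_def by blast
  moreover have "a^2 * b^3 \<noteq> 0" using a b assms(2,3) by auto
  ultimately have "(\<lambda>x y. (t / (a^2 * b^3)) * act ?A ?B F x y) \<in> cone_orbit F"
    using assms(4) unfolding cone_orbit_def by fastforce
  then show ?thesis using \<open>a^2 * b^3 \<noteq> 0\<close> by (simp add: act_rescaled[OF hom])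
qed

subsection \<open>Semistability\<close>

lemma tendsto_mult_vec:
  fixes M :: "nat \<Rightarrow> complex^'n^'m"
  assumes "M \<longlonglongrightarrow> L" "v \<longlonglongrightarrow> w"
  shows "(\<lambda>n. M n *v v n) \<longlonglongrightarrow> L *v w"
  by (rule vec_tendstoI)
    (simp add: matrix_vector_mult_def, intro tendsto_intros tendsto_vec_nth assms)

lemma tendsto_det:
  fixes M :: "nat \<Rightarrow> complex^'n^'n"
  assumes "M \<longlonglongrightarrow> L"
  shows "(\<lambda>n. det (M n)) \<longlonglongrightarrow> det L"
  unfolding det_def by (intro tendsto_intros tendsto_vec_nth assms)

lemma tendsto_cdot: "u \<longlonglongrightarrow> v \<Longrightarrow> (\<lambda>n. cdot (u n) y) \<longlonglongrightarrow> cdot v y"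
  unfolding cdot_def by (intro tendsto_intros tendsto_vec_nth)

lemma tendsto_bilin: "M \<longlonglongrightarrow> N \<Longrightarrow> (\<lambda>n. bilin (M n) x y) \<longlonglongrightarrow> bilin N x y"
  unfolding bilin_def by (intro tendsto_intros tendsto_vec_nth)

lemma limit_of_unit_vectors:
  fixes u :: "nat \<Rightarrow> 'a::real_normed_vector"
  assumes "u \<longlonglongrightarrow> v" "\<And>n. norm (u n) = 1"
  shows "norm v = 1"
  using tendsto_norm[OF assms(1)] by (simp add: assms(2) LIMSEQ_const_iff)

lemma prod_3: "prod f (UNIV::3 set) = f 1 * f 2 * f 3"
  unfolding UNIV_3 by (simp add: ac_simps)

lemma lim_inverse_Suc: "(\<lambda>n. 1 / of_nat (Suc n) :: complex) \<longlonglongrightarrow> 0"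
  using LIMSEQ_Suc[OF lim_1_over_n] .

lemma poly_common_nonroot:
  fixes p q r :: "complex poly"
  assumes "p \<noteq> 0" "q \<noteq> 0" "r \<noteq> 0"
  obtains t where "poly p t \<noteq> 0" "poly q t \<noteq> 0" "poly r t \<noteq> 0"
proof -
  have "finite {t. poly (p * q * r) t = 0}" using assms by (intro poly_roots_finite) simp
  then obtain t where "poly (p * q * r) t \<noteq> 0"
    using ex_new_if_finite[OF infinite_UNIV_char_0] by blast
  then show ?thesis using that by auto
qed

text \<open>Along the curve x = (1, t), y = (1, t^2, t^4) the six monomials x_j y_l become six distinct
  powers of t, so a nonzero linear or bilinear form restricts to a nonzero polynomial.\<close>

definition curve_x :: "complex \<Rightarrow> complex^2" where "curve_x t = vector [1, t]"
definition curve_y :: "complex \<Rightarrow> complex^3" where "curve_y t = vector [1, t^2, t^4]"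

lemma cdot_curve_y: "cdot m (curve_y t) = poly [:m$1, 0, m$2, 0, m$3:] t"
  by (simp add: cdot_3 curve_y_def algebra_simps power2_eq_square power4_eq_xxxx)

lemma bilin_curve:
  "bilin N (curve_x t) (curve_y t) = poly [:N$1$1, N$2$1, N$1$2, N$2$2, N$1$3, N$2$3:] t"
  by (simp add: bilin_expand curve_x_def curve_y_def algebra_simps power2_eq_square power4_eq_xxxx)

lemma cdot_poly_nonzero: "(m::complex^3) \<noteq> 0 \<Longrightarrow> [:m$1, 0, m$2, 0, m$3:] \<noteq> 0"
  by (auto simp: vec_eq_iff forall_3)

lemma bilin_poly_nonzero: "(N::complex^3^2) \<noteq> 0 \<Longrightarrow> [:N$1$1, N$2$1, N$1$2, N$2$2, N$1$3, N$2$3:] \<noteq> 0"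
  by (auto simp: vec_eq_iff forall_3 forall_2)

lemma ex_cdot_product_nonzero:
  assumes "(a::complex^3) \<noteq> 0" "b \<noteq> 0" "c \<noteq> 0"
  obtains y where "cdot a y * cdot b y * cdot c y \<noteq> 0"
proof -
  obtain t where "poly [:a$1, 0, a$2, 0, a$3:] t \<noteq> 0" "poly [:b$1, 0, b$2, 0, b$3:] t \<noteq> 0"
     "poly [:c$1, 0, c$2, 0, c$3:] t \<noteq> 0"
    using poly_common_nonroot cdot_poly_nonzero assms by metis
  then show ?thesis using that[of "curve_y t"] by (simp add: cdot_curve_y)
qed

lemma ex_cdot_bilin_product_nonzero:
  assumes "(m::complex^3) \<noteq> 0" "N1 \<noteq> 0" "N2 \<noteq> 0"
  obtains x y where "cdot m y * bilin N1 x y * bilin N2 x y \<noteq> 0"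
proof -
  obtain t where "poly [:m$1, 0, m$2, 0, m$3:] t \<noteq> 0"
     "poly [:N1$1$1, N1$2$1, N1$1$2, N1$2$2, N1$1$3, N1$2$3:] t \<noteq> 0"
     "poly [:N2$1$1, N2$2$1, N2$1$2, N2$2$2, N2$1$3, N2$2$3:] t \<noteq> 0"
    using poly_common_nonroot cdot_poly_nonzero bilin_poly_nonzero assms by metis
  then have "cdot m (curve_y t) * bilin N1 (curve_x t) (curve_y t)
              * bilin N2 (curve_x t) (curve_y t) \<noteq> 0"
    by (simp add: cdot_curve_y bilin_curve)
  then show ?thesis by (rule that)
qed

definition coord_product :: "complex^3 \<Rightarrow> complex" where
  "coord_product u = u$1 * u$2 * u$3"

lemma coord_product_scaled_rows:
  fixes B :: "complex^3^3"
  assumes "det B = 1"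
  shows "coord_product ((\<chi> i. c i *s B$i) *v y) = det (\<chi> i. c i *s B$i) * coord_product (B *v y)"
proof -
  have "det (\<chi> i. c i *s B$i) = prod c UNIV * det B"
    using det_rows_mul[of c "\<lambda>i. B$i"] by simp
  moreover have "((\<chi> i. c i *s B$i) *v y)$i = c i * (B *v y)$i" for i
    by (simp add: mult_vec_nth_cdot cdot_def sum_distrib_left mult.assoc)
  ultimately show ?thesis using assms by (simp add: coord_product_def prod_3 mult_ac)
qed

lemma unit_rows_convergent_subseq:
  fixes R :: "nat \<Rightarrow> complex^'n^'m"
  assumes unit: "\<And>n i. norm (R n $ i) = 1"
  obtains r L where "strict_mono r" "(R \<circ> r) \<longlonglongrightarrow> L" "\<And>i. norm (L $ i) = 1"
proof -
  have "norm (R n) = sqrt CARD('m)" for n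
    unfolding norm_vec_def[of "R n"] L2_set_def unit by simp
  then have "bounded (range R)" by (metis bounded_iff order_refl rangeE)
  then obtain r L where "strict_mono r" and lim: "(R \<circ> r) \<longlonglongrightarrow> L"
    using bounded_imp_convergent_subsequence by blast
  moreover have "norm (L $ i) = 1" for i
    using limit_of_unit_vectors[OF tendsto_vec_nth[OF lim]] unit by simp
  ultimately show ?thesis using that by blast
qed

text \<open>Normalising the rows of B n and passing to a limit L gives unit rows, whereas
  coord_product (L *v y) would be a limit of det (R n) * coord_product (B n *v y), hence 0.\<close>

lemma coord_product_not_tendsto_zero:
  fixes B :: "nat \<Rightarrow> complex^3^3"
  assumes det: "\<And>n. det (B n) = 1"
  obtains y where "\<not> (\<lambda>n. coord_product (B n *v y)) \<longlonglongrightarrow> 0"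
proof -
  define R where "R n = (\<chi> i. complex_of_real (1 / norm (B n $ i)) *s B n $ i)" for n
  have "B n $ i \<noteq> 0" for n i
    using det_zero_row(2)[of i "B n"] det by (auto simp: row_def vec_nth_inverse)
  moreover have "R n $ i = (1 / norm (B n $ i)) *\<^sub>R B n $ i" for n i
    by (simp add: R_def vec_eq_iff scaleR_conv_of_real[where 'a=complex])
  ultimately have "norm (R n $ i) = 1" for n i by simp
  then obtain r L where r: "strict_mono r" and lim: "(R \<circ> r) \<longlonglongrightarrow> L"
    and "\<And>i. norm (L $ i) = 1"
    using unit_rows_convergent_subseq by blast
  then obtain y where y: "cdot (L$1) y * cdot (L$2) y * cdot (L$3) y \<noteq> 0"
    using ex_cdot_product_nonzero by (metis norm_zero zero_neq_one)
  have "\<not> (\<lambda>n. coord_product (B n *v y)) \<longlonglongrightarrow> 0"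
  proof
    assume "(\<lambda>n. coord_product (B n *v y)) \<longlonglongrightarrow> 0"
    then have "(\<lambda>n. det (R (r n)) * coord_product (B (r n) *v y)) \<longlonglongrightarrow> det L * 0"
      using LIMSEQ_subseq_LIMSEQ[OF _ r] tendsto_det[OF lim]
      by (intro tendsto_mult) (auto simp: o_def)
    moreover have "(\<lambda>n. coord_product (R (r n) *v y)) \<longlonglongrightarrow> coord_product (L *v y)"
      unfolding coord_product_def using lim
      by (intro tendsto_intros tendsto_vec_nth tendsto_mult_vec) (simp_all add: o_def)
    ultimately have "coord_product (L *v y) = 0"
      by (simp add: R_def coord_product_scaled_rows det LIMSEQ_unique)
    with y show False by (simp add: coord_product_def mult_vec_nth_cdot)
  qed
  then show ?thesis by (rule that)
qed

lemma tendsto_zero_of_square: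
  assumes "(\<lambda>n. (f n::complex)^2) \<longlonglongrightarrow> 0" shows "f \<longlonglongrightarrow> 0"
proof -
  have "(\<lambda>n. sqrt (norm (f n ^ 2))) \<longlonglongrightarrow> sqrt 0"
    using tendsto_real_sqrt[OF tendsto_norm_zero[OF assms]] .
  then have "(\<lambda>n. norm (f n)) \<longlonglongrightarrow> 0" by (simp add: norm_power)
  then show ?thesis by (rule tendsto_norm_zero_cancel)
qed

definition in_nullcone :: "form \<Rightarrow> bool" where
  "in_nullcone F \<longleftrightarrow> in_closure (\<lambda>x y. 0) (SL_orbit F)"

lemma semistable_iff: "semistable F \<longleftrightarrow> form23 F \<and> F \<noteq> (\<lambda>x y. 0) \<and> \<not> in_nullcone F"
  by (simp add: semistable_def in_nullcone_def)

lemma SL_orbit_seqE: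
  assumes "\<And>n. s n \<in> SL_orbit F"
  obtains A B where "\<And>n. s n = act (A n) (B n) F" "\<And>n. det (A n) = 1" "\<And>n. det (B n) = 1"
proof -
  have "\<forall>n. \<exists>A B. s n = act A B F \<and> det A = 1 \<and> det B = 1"
    using assms unfolding SL_orbit_def by blast
  then obtain A B where "\<forall>n. s n = act (A n) (B n) F \<and> det (A n) = 1 \<and> det (B n) = 1"
    by metis
  then show ?thesis using that by blast
qed

lemma cone_orbit_seqE:
  assumes "\<And>n. s n \<in> cone_orbit F"
  obtains t A B where "\<And>n. s n = (\<lambda>x y. t n * act (A n) (B n) F x y)"
    "\<And>n. det (A n) = 1" "\<And>n. det (B n) = 1"
proof -
  have "\<forall>n. \<exists>t A B. s n = (\<lambda>x y. t * act A B F x y) \<and> det A = 1 \<and> det B = 1"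
    using assms unfolding cone_orbit_def SL_orbit_def by blast
  then obtain t A B where
    "\<forall>n. s n = (\<lambda>x y. t n * act (A n) (B n) F x y) \<and> det (A n) = 1 \<and> det (B n) = 1"
    by metis
  then show ?thesis using that by blast
qed

lemma not_in_nullcone_act:
  assumes "\<not> in_nullcone H" "det A = 1" "det B = 1"
  shows "\<not> in_nullcone (act A B H)"
proof -
  have "act A B H \<in> SL_orbit H" using assms(2,3) unfolding SL_orbit_def by blast
  then show ?thesis
    using SL_orbit_subset assms(1) unfolding in_nullcone_def in_closure_def by blast
qed

lemma in_nullconeI:
  assumes "\<And>k. det (A k) = 1" "\<And>k. det (B k) = 1"
    and "\<And>x y. (\<lambda>k. H (A k *v x) (B k *v y)) \<longlonglongrightarrow> 0"
  shows "in_nullcone H"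
  unfolding in_nullcone_def in_closure_def
proof (intro exI conjI allI)
  show "act (A k) (B k) H \<in> SL_orbit H" for k using assms(1,2) unfolding SL_orbit_def by blast
  show "(\<lambda>k. act (A k) (B k) H x y) \<longlonglongrightarrow> 0" for x y using assms(3) by (simp add: act_def)
qed

lemma in_nullcone_zero: "in_nullcone (\<lambda>x y. 0)"
  by (rule in_nullconeI[of "\<lambda>_. mat 1" "\<lambda>_. mat 1"]) simp_all

text \<open>For G = a x1^2 + b x1 x2 + c x2^2 (coefficients depending on y) this is b^2 - 4ac.\<close>

definition x_discriminant :: "form \<Rightarrow> complex^3 \<Rightarrow> complex" where
  "x_discriminant G y = (G (vector [1,1]) y - G (vector [1,0]) y - G (vector [0,1]) y)^2
                        - 4 * G (vector [1,0]) y * G (vector [0,1]) y"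

lemma x_discriminant_act_model_form:
  assumes "det A = 1"
  shows "x_discriminant (act A B (model_form al be ga de)) y
           = (al*de - be*ga)^2 * (coord_product (B *v y))^2"
proof -
  have "x_discriminant (act A B (model_form al be ga de)) y =
          (det A)^2 * (al*de - be*ga)^2 * (coord_product (B *v y))^2"
    unfolding x_discriminant_def act_def model_form_def coord_product_def mult_vec_2 det_2
    by simp algebra
  with assms show ?thesis by simp
qed

lemma not_in_nullcone_model_form:
  assumes "al*de - be*ga \<noteq> 0"
  shows "\<not> in_nullcone (model_form al be ga de)"
proof
  assume "in_nullcone (model_form al be ga de)"
  then obtain s where s: "\<And>n. s n \<in> SL_orbit (model_form al be ga de)"
    and lim: "\<And>x y. (\<lambda>n. s n x y) \<longlonglongrightarrow> 0"
    unfolding in_nullcone_def in_closure_def by blast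
  obtain A B where AB: "\<And>n. s n = act (A n) (B n) (model_form al be ga de)"
    and "\<And>n. det (A n) = 1" and det: "\<And>n. det (B n) = 1"
    by (rule SL_orbit_seqE[of s, OF s]) blast
  then have disc: "x_discriminant (s n) y = (al*de - be*ga)^2 * (coord_product (B n *v y))^2"
    for n y
    by (simp add: x_discriminant_act_model_form)
  have "(\<lambda>n. coord_product (B n *v y)) \<longlonglongrightarrow> 0" for y
  proof -
    have "(\<lambda>n. x_discriminant (s n) y) \<longlonglongrightarrow> (0 - 0 - 0)^2 - 4 * 0 * 0"
      unfolding x_discriminant_def by (intro tendsto_intros lim)
    then have "(\<lambda>n. (al*de - be*ga)^2 * (coord_product (B n *v y))^2) \<longlonglongrightarrow> 0"
      by (simp add: disc)
    then have "(\<lambda>n. (coord_product (B n *v y))^2) \<longlonglongrightarrow> 0"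
      using assms by (simp add: tendsto_mult_left_iff)
    then show ?thesis by (rule tendsto_zero_of_square)
  qed
  then show False using coord_product_not_tendsto_zero[of B, OF det] by blast
qed

subsection \<open>Limits of the cone over the orbit\<close>

definition factor_matrix :: "complex \<Rightarrow> complex \<Rightarrow> complex^2^2 \<Rightarrow> complex^3^3 \<Rightarrow> complex^3^2" where
  "factor_matrix al be A B = (\<chi> j l. al * A$2$j * B$1$l + be * A$1$j * B$3$l)"

lemma bilin_factor_matrix:
  "bilin (factor_matrix al be A B) x y
     = al * (A *v x)$2 * (B *v y)$1 + be * (A *v x)$1 * (B *v y)$3"
  unfolding bilin_expand factor_matrix_def mult_vec_2 mult_vec_3 by simp algebra

lemma act_model_form:
  "act A B (model_form al be ga de) x y
     = cdot (B$2) y * bilin (factor_matrix al be A B) x y * bilin (factor_matrix ga de A B) x y"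
  by (simp add: act_def model_form_def bilin_factor_matrix mult_vec_nth_cdot)

definition ccross :: "complex^3 \<Rightarrow> complex^3 \<Rightarrow> complex^3" where
  "ccross u w = vector [u$2 * w$3 - u$3 * w$2, u$3 * w$1 - u$1 * w$3, u$1 * w$2 - u$2 * w$1]"

lemma ccross_nth [simp]:
  "ccross u w $ 1 = u$2 * w$3 - u$3 * w$2"
  "ccross u w $ 2 = u$3 * w$1 - u$1 * w$3"
  "ccross u w $ 3 = u$1 * w$2 - u$2 * w$1"
  by (simp_all add: ccross_def)

lemma cdot_ccross_det: "cdot (B$2) (ccross (B$3) (B$1)) = det (B::complex^3^3)"
  by (simp add: cdot_3 det_3 algebra_simps)

lemma tendsto_ccross:
  assumes "u \<longlonglongrightarrow> u'" "w \<longlonglongrightarrow> w'"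
  shows "(\<lambda>n. ccross (u n) (w n)) \<longlonglongrightarrow> ccross u' w'"
proof (rule vec_tendstoI)
  fix i :: 3
  have "(\<lambda>n. ccross (u n) (w n) $ 1) \<longlonglongrightarrow> ccross u' w' $ 1"
    "(\<lambda>n. ccross (u n) (w n) $ 2) \<longlonglongrightarrow> ccross u' w' $ 2"
    "(\<lambda>n. ccross (u n) (w n) $ 3) \<longlonglongrightarrow> ccross u' w' $ 3"
    unfolding ccross_nth by (intro tendsto_intros assms)+
  then show "(\<lambda>n. ccross (u n) (w n) $ i) \<longlonglongrightarrow> ccross u' w' $ i"
    using exhaust_3[of i] by auto
qed

definition row_cross :: "complex^3^2 \<Rightarrow> complex^3" where
  "row_cross N = ccross (N$1) (N$2)"

definition row_cross_polar :: "complex^3^2 \<Rightarrow> complex^3^2 \<Rightarrow> complex^3" where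
  "row_cross_polar N1 N2 = ccross (N1$1) (N2$2) + ccross (N2$1) (N1$2)"

text \<open>A closed condition on the two bilinear factors that holds along the orbit of
  model_form al be ga de, hence also for its limits.\<close>

definition pencil_relation ::
    "complex \<Rightarrow> complex \<Rightarrow> complex \<Rightarrow> complex \<Rightarrow> complex^3^2 \<Rightarrow> complex^3^2 \<Rightarrow> bool" where
  "pencil_relation al be ga de N1 N2 \<longleftrightarrow>
    (\<forall>i j. al*be*ga*de * row_cross_polar N1 N2 $ i * row_cross_polar N1 N2 $ j
           = (al*de + be*ga)^2 * row_cross N1 $ i * row_cross N2 $ j)
    \<and> (al*be = 0 \<longrightarrow> row_cross N1 = 0) \<and> (ga*de = 0 \<longrightarrow> row_cross N2 = 0)"

lemma row_cross_factor_matrix: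
  "row_cross (factor_matrix al be A B) = (- al * be * det A) *s ccross (B$1) (B$3)"
  unfolding vec_eq_iff forall_3 row_cross_def factor_matrix_def det_2
  by (simp add: algebra_simps)

lemma row_cross_polar_factor_matrix:
  "row_cross_polar (factor_matrix al be A B) (factor_matrix ga de A B)
     = (- (al*de + be*ga) * det A) *s ccross (B$1) (B$3)"
  unfolding vec_eq_iff forall_3 row_cross_polar_def factor_matrix_def det_2
  by (simp add: algebra_simps)

lemma pencil_relation_factor_matrix:
  "pencil_relation al be ga de (factor_matrix al be A B) (factor_matrix ga de A B)"
  unfolding pencil_relation_def row_cross_factor_matrix row_cross_polar_factor_matrix
  by (simp add: vec_eq_iff) algebra

lemma row_cross_scaleR: "row_cross (r *\<^sub>R N) = (of_real r)^2 *s row_cross N"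
  unfolding vec_eq_iff forall_3 row_cross_def
  by (simp add: power2_eq_square scaleR_conv_of_real[where 'a=complex] algebra_simps)

lemma row_cross_polar_scaleR:
  "row_cross_polar (r1 *\<^sub>R N1) (r2 *\<^sub>R N2) = (of_real r1 * of_real r2) *s row_cross_polar N1 N2"
  unfolding vec_eq_iff forall_3 row_cross_polar_def
  by (simp add: scaleR_conv_of_real[where 'a=complex] algebra_simps)

lemma pencil_relation_scaleR:
  assumes "pencil_relation al be ga de N1 N2"
  shows "pencil_relation al be ga de (r1 *\<^sub>R N1) (r2 *\<^sub>R N2)"
proof -
  let ?c = "complex_of_real r1 * complex_of_real r2"
  have "al*be*ga*de * (?c * p) * (?c * q)
          = (al*de + be*ga)^2 * ((of_real r1)^2 * u) * ((of_real r2)^2 * v)"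
    if "al*be*ga*de * p * q = (al*de + be*ga)^2 * u * v" for p q u v
  proof -
    have "al*be*ga*de * (?c * p) * (?c * q) = ?c^2 * (al*be*ga*de * p * q)"
      by (simp add: power2_eq_square)
    also have "\<dots> = ?c^2 * ((al*de + be*ga)^2 * u * v)" by (simp only: that)
    finally show ?thesis by (simp add: power_mult_distrib)
  qed
  then show ?thesis
    using assms unfolding pencil_relation_def row_cross_scaleR row_cross_polar_scaleR by simp
qed

lemma tendsto_row_cross: "N \<longlonglongrightarrow> N' \<Longrightarrow> (\<lambda>n. row_cross (N n)) \<longlonglongrightarrow> row_cross N'"
  unfolding row_cross_def by (intro tendsto_ccross tendsto_vec_nth)

lemma tendsto_row_cross_polar:
  "N1 \<longlonglongrightarrow> N1' \<Longrightarrow> N2 \<longlonglongrightarrow> N2' \<Longrightarrow>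
     (\<lambda>n. row_cross_polar (N1 n) (N2 n)) \<longlonglongrightarrow> row_cross_polar N1' N2'"
  unfolding row_cross_polar_def by (intro tendsto_add tendsto_ccross tendsto_vec_nth)

lemma pencil_relation_limit:
  assumes lim: "N1 \<longlonglongrightarrow> N1'" "N2 \<longlonglongrightarrow> N2'"
    and rel: "\<And>n. pencil_relation al be ga de (N1 n) (N2 n)"
  shows "pencil_relation al be ga de N1' N2'"
proof -
  note cross1 = tendsto_row_cross[OF lim(1)] and cross2 = tendsto_row_cross[OF lim(2)]
  note polar = tendsto_row_cross_polar[OF lim]
  have "al*be*ga*de * row_cross_polar N1' N2' $ i * row_cross_polar N1' N2' $ j
          = (al*de + be*ga)^2 * row_cross N1' $ i * row_cross N2' $ j" for i j
  proof (rule LIMSEQ_unique)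
    show "(\<lambda>n. al*be*ga*de * row_cross_polar (N1 n) (N2 n) $ i * row_cross_polar (N1 n) (N2 n) $ j)
            \<longlonglongrightarrow> al*be*ga*de * row_cross_polar N1' N2' $ i * row_cross_polar N1' N2' $ j"
      by (intro tendsto_intros tendsto_vec_nth polar)
    show "(\<lambda>n. al*be*ga*de * row_cross_polar (N1 n) (N2 n) $ i * row_cross_polar (N1 n) (N2 n) $ j)
            \<longlonglongrightarrow> (al*de + be*ga)^2 * row_cross N1' $ i * row_cross N2' $ j"
      using rel unfolding pencil_relation_def
      by (simp only:) (intro tendsto_intros tendsto_vec_nth cross1 cross2)
  qed
  moreover have "row_cross N1' = 0" if "al*be = 0"
    using cross1 rel that by (simp add: pencil_relation_def LIMSEQ_const_iff)
  moreover have "row_cross N2' = 0" if "ga*de = 0"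
    using cross2 rel that by (simp add: pencil_relation_def LIMSEQ_const_iff)
  ultimately show ?thesis unfolding pencil_relation_def by blast
qed

lemma factor_matrix_kernel: "factor_matrix al be A B *v ccross (B$3) (B$1) = 0"
  unfolding vec_eq_iff forall_2 matrix_vector_mult_def factor_matrix_def
  by (simp add: sum_3 algebra_simps)

lemma factor_matrix_nonzero:
  assumes "det A = 1" "det B = 1" "al \<noteq> 0 \<or> be \<noteq> 0"
  shows "factor_matrix al be A B \<noteq> 0"
proof
  assume "factor_matrix al be A B = 0"
  then have vanish: "al * (A *v x)$2 * (B *v y)$1 + be * (A *v x)$1 * (B *v y)$3 = 0" for x y
    using bilin_factor_matrix[of al be A B x y] by (simp add: bilin_def)
  have "al = 0"
  proof -
    let ?x = "vector [- A$1$2, A$1$1] :: complex^2" and ?y = "ccross (B$2) (B$3)"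
    have "(A *v ?x)$2 = 1" "(A *v ?x)$1 = 0"
      using assms(1) by (simp_all add: mult_vec_2 det_2 algebra_simps)
    moreover have "(B *v ?y)$1 = 1" "(B *v ?y)$3 = 0"
      using assms(2) by (simp_all add: mult_vec_3 det_3 algebra_simps)
    ultimately show ?thesis using vanish[of ?x ?y] by simp
  qed
  moreover have "be = 0"
  proof -
    let ?x = "vector [A$2$2, - A$2$1] :: complex^2" and ?y = "ccross (B$1) (B$2)"
    have "(A *v ?x)$1 = 1" "(A *v ?x)$2 = 0"
      using assms(1) by (simp_all add: mult_vec_2 det_2 algebra_simps)
    moreover have "(B *v ?y)$3 = 1" "(B *v ?y)$1 = 0"
      using assms(2) by (simp_all add: mult_vec_3 det_3 algebra_simps)
    ultimately show ?thesis using vanish[of ?x ?y] by simp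
  qed
  ultimately show False using assms(3) by simp
qed

lemma cdot_scaleR: "cdot (r *\<^sub>R m) y = of_real r * cdot m y"
  by (simp add: cdot_def scaleR_conv_of_real[where 'a=complex] sum_distrib_left mult.assoc)

lemma bilin_scaleR: "bilin (r *\<^sub>R N) x y = of_real r * bilin N x y"
  by (simp add: bilin_def scaleR_conv_of_real[where 'a=complex] sum_distrib_left algebra_simps)

lemma scaleR_mult_vec_scaleR: "(r *\<^sub>R (N::complex^'n^'m)) *v (q *\<^sub>R w) = (r * q) *\<^sub>R (N *v w)"
  by (simp add: vec_eq_iff matrix_vector_mult_def scaleR_conv_of_real[where 'a=complex]
      sum_distrib_left algebra_simps)

definition factored_form :: "complex \<Rightarrow> complex^3 \<Rightarrow> complex^3^2 \<Rightarrow> complex^3^2 \<Rightarrow> form" where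
  "factored_form \<mu> m N1 N2 = (\<lambda>x y. \<mu> * (cdot m y * bilin N1 x y * bilin N2 x y))"

lemma limit_of_multiples:
  fixes P :: "nat \<Rightarrow> 'a \<Rightarrow> 'b \<Rightarrow> 'c::real_normed_field"
  assumes P: "\<And>x y. (\<lambda>n. P n x y) \<longlonglongrightarrow> Q x y"
    and cP: "\<And>x y. (\<lambda>n. c n * P n x y) \<longlonglongrightarrow> H x y"
    and "Q x0 y0 \<noteq> 0"
  obtains \<mu> where "\<And>x y. H x y = \<mu> * Q x y"
proof
  have "(\<lambda>n. c n * P n x0 y0 / P n x0 y0) \<longlonglongrightarrow> H x0 y0 / Q x0 y0"
    by (intro tendsto_divide P cP assms(3))
  moreover have "eventually (\<lambda>n. c n * P n x0 y0 / P n x0 y0 = c n) sequentially"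
    using tendsto_imp_eventually_ne[OF P assms(3)] by eventually_elim simp
  ultimately have c: "c \<longlonglongrightarrow> H x0 y0 / Q x0 y0"
    by (rule Lim_transform_eventually)
  show "H x y = H x0 y0 / Q x0 y0 * Q x y" for x y
    using LIMSEQ_unique[OF cP tendsto_mult[OF c P]] .
qed

lemma limit_of_factored_forms:
  assumes "m \<longlonglongrightarrow> m'" "N1 \<longlonglongrightarrow> N1'" "N2 \<longlonglongrightarrow> N2'" "m' \<noteq> 0" "N1' \<noteq> 0" "N2' \<noteq> 0"
    and lim: "\<And>x y. (\<lambda>n. factored_form (c n) (m n) (N1 n) (N2 n) x y) \<longlonglongrightarrow> H x y"
  obtains \<mu> where "H = factored_form \<mu> m' N1' N2'"
proof -
  define P where "P n x y = cdot (m n) y * bilin (N1 n) x y * bilin (N2 n) x y" for n x y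
  define Q where "Q x y = cdot m' y * bilin N1' x y * bilin N2' x y" for x y
  obtain x0 y0 where "Q x0 y0 \<noteq> 0"
    unfolding Q_def using ex_cdot_bilin_product_nonzero assms(4-6) by blast
  moreover have "(\<lambda>n. P n x y) \<longlonglongrightarrow> Q x y" for x y
    unfolding P_def Q_def by (intro tendsto_mult tendsto_cdot tendsto_bilin assms(1-3))
  moreover have "(\<lambda>n. c n * P n x y) \<longlonglongrightarrow> H x y" for x y
    using lim by (simp add: P_def factored_form_def)
  ultimately obtain \<mu> where "\<And>x y. H x y = \<mu> * Q x y"
    using limit_of_multiples[of P Q c H x0 y0] by blast
  then have "H = factored_form \<mu> m' N1' N2'" by (simp add: fun_eq_iff factored_form_def Q_def)
  then show ?thesis by (rule that)
qed

lemma limit_of_unit_factored_forms: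
  assumes s: "\<And>n. s n = factored_form (c n) (m n) (N1 n) (N2 n)"
    and unit: "\<And>n. norm (m n) = 1" "\<And>n. norm (N1 n) = 1" "\<And>n. norm (N2 n) = 1"
      "\<And>n. norm (w n) = 1"
    and kernel: "\<And>n. N1 n *v w n = 0" "\<And>n. N2 n *v w n = 0"
    and rel: "\<And>n. pencil_relation al be ga de (N1 n) (N2 n)"
    and lim: "\<And>x y. (\<lambda>n. s n x y) \<longlonglongrightarrow> H x y"
  obtains \<mu> m' N1' N2' w' where "w' \<noteq> 0" "N1' *v w' = 0" "N2' *v w' = 0"
    "pencil_relation al be ga de N1' N2'" "H = factored_form \<mu> m' N1' N2'"
proof -
  let ?S = "sphere (0::complex^3) 1 \<times> sphere (0::complex^3^2) 1 \<times> sphere (0::complex^3^2) 1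
              \<times> sphere (0::complex^3) 1"
  define g where "g n = (m n, N1 n, N2 n, w n)" for n
  have "\<forall>n. g n \<in> ?S" using unit by (simp add: g_def)
  moreover have "seq_compact ?S"
    by (intro compact_imp_seq_compact compact_Times compact_sphere)
  ultimately obtain l r where "l \<in> ?S" and r: "strict_mono r" and "(g \<circ> r) \<longlonglongrightarrow> l"
    using seq_compactE by blast
  moreover obtain m' N1' N2' w' where "l = (m', N1', N2', w')" by (cases l)
  ultimately have unit': "norm m' = 1" "norm N1' = 1" "norm N2' = 1" "norm w' = 1"
    and lim_g: "(\<lambda>n. (m (r n), N1 (r n), N2 (r n), w (r n))) \<longlonglongrightarrow> (m', N1', N2', w')"
    by (auto simp: g_def o_def)
  have lm: "(\<lambda>n. m (r n)) \<longlonglongrightarrow> m'" using tendsto_fst[OF lim_g] by simp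
  have l1: "(\<lambda>n. N1 (r n)) \<longlonglongrightarrow> N1'" using tendsto_fst[OF tendsto_snd[OF lim_g]] by simp
  have l2: "(\<lambda>n. N2 (r n)) \<longlonglongrightarrow> N2'"
    using tendsto_fst[OF tendsto_snd[OF tendsto_snd[OF lim_g]]] by simp
  have lw: "(\<lambda>n. w (r n)) \<longlonglongrightarrow> w'"
    using tendsto_snd[OF tendsto_snd[OF tendsto_snd[OF lim_g]]] by simp
  have conv: "(\<lambda>n. factored_form (c (r n)) (m (r n)) (N1 (r n)) (N2 (r n)) x y) \<longlonglongrightarrow> H x y"
    for x y using LIMSEQ_subseq_LIMSEQ[OF lim r] by (simp add: o_def s)
  have nz: "m' \<noteq> 0" "N1' \<noteq> 0" "N2' \<noteq> 0" "w' \<noteq> 0" using unit' by auto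
  obtain \<mu> where "H = factored_form \<mu> m' N1' N2'"
    using limit_of_factored_forms[OF lm l1 l2 nz(1-3) conv] by blast
  moreover have "N1' *v w' = 0" "N2' *v w' = 0"
    using tendsto_mult_vec[OF l1 lw] tendsto_mult_vec[OF l2 lw]
    by (simp_all add: kernel LIMSEQ_const_iff)
  moreover have "pencil_relation al be ga de N1' N2'"
    using l1 l2 rel by (rule pencil_relation_limit)
  ultimately show ?thesis using that nz(4) by blast
qed

lemma closure_cone_orbit_model_form:
  assumes nd: "al*de - be*ga \<noteq> 0" and cl: "in_closure H (cone_orbit (model_form al be ga de))"
  obtains \<mu> m N1 N2 w where "w \<noteq> 0" "N1 *v w = 0" "N2 *v w = 0"
    "pencil_relation al be ga de N1 N2" "H = factored_form \<mu> m N1 N2"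
proof -
  obtain s where s: "\<And>n. s n \<in> cone_orbit (model_form al be ga de)"
    and lim: "\<And>x y. (\<lambda>n. s n x y) \<longlonglongrightarrow> H x y"
    using cl unfolding in_closure_def by blast
  obtain t A B where st: "\<And>n. s n = (\<lambda>x y. t n * act (A n) (B n) (model_form al be ga de) x y)"
    and detA: "\<And>n. det (A n) = 1" and detB: "\<And>n. det (B n) = 1"
    by (rule cone_orbit_seqE[of s, OF s]) blast
  define m where "m n = B n $ 2" for n
  define N1 where "N1 n = factor_matrix al be (A n) (B n)" for n
  define N2 where "N2 n = factor_matrix ga de (A n) (B n)" for n
  define w where "w n = ccross (B n $ 3) (B n $ 1)" for n
  have mw: "cdot (m n) (w n) = 1" for n
    using cdot_ccross_det[of "B n"] detB[of n] by (simp add: m_def w_def)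
  have nz: "m n \<noteq> 0" "w n \<noteq> 0" for n using mw[of n] by (auto simp: cdot_def)
  have "al \<noteq> 0 \<or> be \<noteq> 0" "ga \<noteq> 0 \<or> de \<noteq> 0" using nd by auto
  then have nz': "N1 n \<noteq> 0" "N2 n \<noteq> 0" for n
    unfolding N1_def N2_def using detA[of n] detB[of n] by (simp_all add: factor_matrix_nonzero)
  define c where "c n = t n * of_real (norm (m n) * norm (N1 n) * norm (N2 n))" for n
  show ?thesis
  proof (rule limit_of_unit_factored_forms[where s = s and c = c and H = H])
    show "s n = factored_form (c n) (sgn (m n)) (sgn (N1 n)) (sgn (N2 n))" for n
      using nz[of n] nz'[of n]
      by (simp add: fun_eq_iff factored_form_def st act_model_form c_def sgn_div_norm cdot_scaleR
          bilin_scaleR m_def N1_def N2_def field_simps)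
    show "norm (sgn (m n)) = 1" "norm (sgn (N1 n)) = 1" "norm (sgn (N2 n)) = 1"
      "norm (sgn (w n)) = 1" for n
      using nz nz' by (simp_all add: norm_sgn)
    show "sgn (N1 n) *v sgn (w n) = 0" "sgn (N2 n) *v sgn (w n) = 0" for n
      by (simp_all add: sgn_div_norm scaleR_mult_vec_scaleR N1_def N2_def w_def
          factor_matrix_kernel)
    show "pencil_relation al be ga de (sgn (N1 n)) (sgn (N2 n))" for n
      unfolding sgn_div_norm N1_def N2_def
      by (intro pencil_relation_scaleR pencil_relation_factor_matrix)
  qed (fact lim, (rule that; assumption))
qed

subsection \<open>Reduction of the limit forms\<close>

definition free_of_y2 :: "complex^3^2 \<Rightarrow> bool" where
  "free_of_y2 P \<longleftrightarrow> P$1$2 = 0 \<and> P$2$2 = 0"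

lemma cdot_axis: "cdot (axis k 1) y = y$k"
proof -
  have "cdot (axis k 1) y = (\<Sum>i\<in>UNIV. y$i * axis k 1 $ i)" by (simp add: cdot_def mult.commute)
  then show ?thesis by (simp add: axis_def if_distrib sum.If_cases cong del: if_weak_cong)
qed

lemma mult_vec_axis: "(M *v axis k 1)$j = M$j$k"
  by (simp add: matrix_vector_mult_def axis_def if_distrib sum.If_cases cong del: if_weak_cong)

lemma cdot_mult_vec: "cdot m (B *v y) = cdot (transpose B *v m) y"
  by (simp add: cdot_def matrix_vector_mult_def transpose_def sum_distrib_left sum_distrib_right
      mult_ac) (rule sum.swap)

lemma bilin_mult_vec: "bilin N x (B *v y) = bilin (N ** B) x y"
  by (simp add: bilin_expand mult_vec_3 matrix_matrix_mult_def sum_3 algebra_simps)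

lemma act_factored_form:
  "act (mat 1) B (factored_form \<mu> m N1 N2) = factored_form \<mu> (transpose B *v m) (N1 ** B) (N2 ** B)"
  by (simp add: act_def factored_form_def cdot_mult_vec bilin_mult_vec)

lemma free_of_y2_iff_kernel: "free_of_y2 P \<longleftrightarrow> P *v axis 2 1 = 0"
  by (simp add: free_of_y2_def vec_eq_iff forall_2 mult_vec_axis)

lemma free_of_y2_mult:
  assumes "free_of_y2 P" "B$1$2 = 0" "B$3$2 = 0"
  shows "free_of_y2 (P ** B)"
  using assms by (simp add: free_of_y2_def matrix_matrix_mult_def sum_3)

lemma bilin_free_of_y2:
  "free_of_y2 P \<Longrightarrow>
     bilin P x y = x$1 * (P$1$1 * y$1 + P$1$3 * y$3) + x$2 * (P$2$1 * y$1 + P$2$3 * y$3)"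
  by (simp add: bilin_expand free_of_y2_def algebra_simps)

definition adjugate3 :: "complex^3^3 \<Rightarrow> complex^3^3" where
  "adjugate3 B = vector [
    vector [B$2$2*B$3$3 - B$3$2*B$2$3, B$3$2*B$1$3 - B$1$2*B$3$3, B$1$2*B$2$3 - B$2$2*B$1$3],
    vector [B$2$3*B$3$1 - B$3$3*B$2$1, B$3$3*B$1$1 - B$1$3*B$3$1, B$1$3*B$2$1 - B$2$3*B$1$1],
    vector [B$2$1*B$3$2 - B$3$1*B$2$2, B$3$1*B$1$2 - B$1$1*B$3$2, B$1$1*B$2$2 - B$2$1*B$1$2]]"

lemma ccross_mult_vec:
  "ccross (transpose B *v u) (transpose B *v v) = adjugate3 B *v ccross u v"
  unfolding vec_eq_iff forall_3
  by (simp add: mult_vec_3 adjugate3_def transpose_def algebra_simps)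

lemma row_matrix_mult: "((N::complex^3^2) ** B) $ j = transpose B *v N$j"
  by (simp add: vec_eq_iff matrix_matrix_mult_def matrix_vector_mult_def transpose_def mult.commute)

lemma row_cross_mult: "row_cross (N ** B) = adjugate3 B *v row_cross N"
  unfolding row_cross_def row_matrix_mult ccross_mult_vec ..

lemma row_cross_polar_mult:
  "row_cross_polar (N1 ** B) (N2 ** B) = adjugate3 B *v row_cross_polar N1 N2"
  unfolding row_cross_polar_def row_matrix_mult ccross_mult_vec
  by (simp add: matrix_vector_right_distrib)

lemma bilinear_identity_mult_vec:
  fixes L :: "complex^3^3"
  assumes "\<And>a b. k1 * u$a * u$b = k2 * v$a * w$b"
  shows "k1 * (L *v u)$i * (L *v u)$j = k2 * (L *v v)$i * (L *v w)$j"
proof -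
  have "k1 * (L *v u)$i * (L *v u)$j = (\<Sum>a\<in>UNIV. \<Sum>b\<in>UNIV. L$i$a * L$j$b * (k1 * u$a * u$b))"
    by (simp add: matrix_vector_mult_def sum_product sum_distrib_left mult_ac)
  also have "\<dots> = (\<Sum>a\<in>UNIV. \<Sum>b\<in>UNIV. L$i$a * L$j$b * (k2 * v$a * w$b))"
    by (simp only: assms)
  also have "\<dots> = k2 * (L *v v)$i * (L *v w)$j"
    by (simp add: matrix_vector_mult_def sum_product sum_distrib_left mult_ac)
  finally show ?thesis .
qed

lemma pencil_relation_mult:
  "pencil_relation al be ga de N1 N2 \<Longrightarrow> pencil_relation al be ga de (N1 ** B) (N2 ** B)"
  unfolding pencil_relation_def row_cross_mult row_cross_polar_mult
  by (auto intro: bilinear_identity_mult_vec)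

lemma SL3_maps_axis2:
  assumes "(w::complex^3) \<noteq> 0"
  obtains B where "det B = 1" "B *v axis 2 1 = w"
proof -
  consider "w$2 \<noteq> 0" | "w$1 \<noteq> 0" | "w$3 \<noteq> 0" using assms by (auto simp: vec_eq_iff forall_3)
  then show ?thesis
  proof cases
    case 1
    let ?B = "vector [vector [1/w$2, w$1, 0], vector [0, w$2, 0], vector [0, w$3, 1]]
                :: complex^3^3"
    have "det ?B = 1" "?B *v axis 2 1 = w"
      using 1 by (simp_all add: det_3 vec_eq_iff forall_3 mult_vec_axis)
    then show ?thesis by (rule that)
  next
    case 2
    let ?B = "vector [vector [0, w$1, 0], vector [-1/w$1, w$2, 0], vector [0, w$3, 1]]
                :: complex^3^3"
    have "det ?B = 1" "?B *v axis 2 1 = w"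
      using 2 by (simp_all add: det_3 vec_eq_iff forall_3 mult_vec_axis)
    then show ?thesis by (rule that)
  next
    case 3
    let ?B = "vector [vector [1, w$1, 0], vector [0, w$2, -1/w$3], vector [0, w$3, 0]]
                :: complex^3^3"
    have "det ?B = 1" "?B *v axis 2 1 = w"
      using 3 by (simp_all add: det_3 vec_eq_iff forall_3 mult_vec_axis)
    then show ?thesis by (rule that)
  qed
qed

text \<open>The conditions on the second column make B preserve free_of_y2 (free_of_y2_mult).\<close>

lemma SL3_dual_maps_to_axis2:
  assumes "(m::complex^3)$2 \<noteq> 0"
  obtains B where "det B = 1" "transpose B *v m = axis 2 1" "B$1$2 = 0" "B$3$2 = 0"
proof
  let ?B = "vector [vector [m$2, 0, 0], vector [- m$1, 1 / m$2, - m$3 / m$2], vector [0, 0, 1]]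
              :: complex^3^3"
  show "det ?B = 1" "transpose ?B *v m = axis 2 1" "?B$1$2 = 0" "?B$3$2 = 0"
    using assms by (simp_all add: det_3 vec_eq_iff forall_3 mult_vec_3 transpose_def axis_def)
qed

lemma in_nullcone_independent_of_y2:
  assumes "m$2 = 0" "free_of_y2 P1" "free_of_y2 P2"
  shows "in_nullcone (factored_form \<mu> m P1 P2)"
proof -
  define k where "k n = (of_nat (Suc n) :: complex)" for n
  have k: "k n \<noteq> 0" for n unfolding k_def by (simp del: of_nat_Suc)
  define D where "D n = (vector [vector [1 / k n, 0, 0], vector [0, (k n)^2, 0],
                          vector [0, 0, 1 / k n]] :: complex^3^3)" for n
  show ?thesis
  proof (rule in_nullconeI)
    show "det (mat 1 :: complex^2^2) = 1" by simp
    show "det (D n) = 1" for n using k[of n] by (simp add: D_def det_3 power2_eq_square)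
    fix x y
    have "factored_form \<mu> m P1 P2 (mat 1 *v x) (D n *v y)
            = (1 / k n)^3 * factored_form \<mu> m P1 P2 x y" for n
      using assms by (simp add: factored_form_def D_def mult_vec_3 cdot_3 bilin_free_of_y2
          power3_eq_cube algebra_simps)
    moreover have "(\<lambda>n. (1 / k n)^3 * factored_form \<mu> m P1 P2 x y)
                     \<longlonglongrightarrow> 0^3 * factored_form \<mu> m P1 P2 x y"
      unfolding k_def by (intro tendsto_intros lim_inverse_Suc)
    ultimately show "(\<lambda>n. factored_form \<mu> m P1 P2 (mat 1 *v x) (D n *v y)) \<longlonglongrightarrow> 0"
      by simp
  qed
qed

lemma reduce_factored_form:
  assumes "w \<noteq> 0" "N1 *v w = 0" "N2 *v w = 0" "pencil_relation al be ga de N1 N2"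
    and H: "\<not> in_nullcone (factored_form \<mu> m N1 N2)"
  obtains B P1 P2 where "det B = 1" "free_of_y2 P1" "free_of_y2 P2"
    "pencil_relation al be ga de P1 P2"
    "act (mat 1) B (factored_form \<mu> m N1 N2) = factored_form \<mu> (axis 2 1) P1 P2"
proof -
  obtain B0 where B0: "det B0 = 1" "B0 *v axis 2 1 = w" using SL3_maps_axis2 assms(1) by blast
  let ?m = "transpose B0 *v m"
  have free: "free_of_y2 (N1 ** B0)" "free_of_y2 (N2 ** B0)"
    using assms(2,3) B0(2)
    by (simp_all add: free_of_y2_iff_kernel matrix_vector_mul_assoc[symmetric])
  have "\<not> in_nullcone (factored_form \<mu> ?m (N1 ** B0) (N2 ** B0))"
    using not_in_nullcone_act[OF H _ B0(1), of "mat 1"] by (simp add: act_factored_form)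
  then have "?m$2 \<noteq> 0" using in_nullcone_independent_of_y2 free by blast
  then obtain B1 where B1: "det B1 = 1" "transpose B1 *v ?m = axis 2 1" "B1$1$2 = 0" "B1$3$2 = 0"
    by (rule SL3_dual_maps_to_axis2)
  show ?thesis
  proof
    show "det (B0 ** B1) = 1" using B0 B1 by (simp add: det_mul)
    show "free_of_y2 (N1 ** (B0 ** B1))" "free_of_y2 (N2 ** (B0 ** B1))"
      using free B1 by (simp_all add: matrix_mul_assoc free_of_y2_mult)
    show "pencil_relation al be ga de (N1 ** (B0 ** B1)) (N2 ** (B0 ** B1))"
      using assms(4) by (rule pencil_relation_mult)
    show "act (mat 1) (B0 ** B1) (factored_form \<mu> m N1 N2)
            = factored_form \<mu> (axis 2 1) (N1 ** (B0 ** B1)) (N2 ** (B0 ** B1))"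
    proof -
      have "transpose (B0 ** B1) *v m = axis 2 1"
        using B1(2) by (simp only: matrix_transpose_mul matrix_vector_mul_assoc[symmetric])
      then show ?thesis by (simp add: act_factored_form)
    qed
  qed
qed

text \<open>Reduced forms are y2 l1 l2 with l1, l2 bilinear in x and (y1, y3), encoded by 2 x 2 matrices;
  embed13 Y acts on (y1, y3) by Y and fixes y2.\<close>

definition y13 :: "complex^3 \<Rightarrow> complex^2" where
  "y13 y = vector [y$1, y$3]"

definition embed13 :: "complex^2^2 \<Rightarrow> complex^3^3" where
  "embed13 Y = vector [vector [Y$1$1, 0, Y$1$2], vector [0, 1, 0], vector [Y$2$1, 0, Y$2$2]]"

definition block13 :: "complex^3^2 \<Rightarrow> complex^2^2" where
  "block13 P = vector [vector [P$1$1, P$1$3], vector [P$2$1, P$2$3]]"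

definition reduced_form :: "complex \<Rightarrow> complex^2^2 \<Rightarrow> complex^2^2 \<Rightarrow> form" where
  "reduced_form \<mu> T1 T2 = (\<lambda>x y. \<mu> * y$2 * cdot x (T1 *v y13 y) * cdot x (T2 *v y13 y))"

definition antidiag :: "complex \<Rightarrow> complex \<Rightarrow> complex^2^2" where
  "antidiag a b = vector [vector [0, b], vector [a, 0]]"

definition mixed_det :: "complex^2^2 \<Rightarrow> complex^2^2 \<Rightarrow> complex" where
  "mixed_det T1 T2 = det (T1 + T2) - det T1 - det T2"

lemma cdot_2: "cdot (u::complex^2) x = u$1 * x$1 + u$2 * x$2"
  by (simp add: cdot_def sum_2)

lemma cdot_commute: "cdot u x = cdot x u"
  by (simp add: cdot_def mult.commute)

lemma y13_embed13: "y13 (embed13 Y *v y) = Y *v y13 y"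
  by (simp add: y13_def embed13_def vec_eq_iff forall_2 mult_vec_2 mult_vec_3)

lemma embed13_nth_2: "(embed13 Y *v y)$2 = y$2"
  by (simp add: embed13_def mult_vec_3)

lemma det_embed13: "det (embed13 Y) = det Y"
  by (simp add: embed13_def det_3 det_2 algebra_simps)

lemma factored_form_axis2:
  assumes "free_of_y2 P1" "free_of_y2 P2"
  shows "factored_form \<mu> (axis 2 1) P1 P2 = reduced_form \<mu> (block13 P1) (block13 P2)"
  using assms
  by (simp add: fun_eq_iff factored_form_def reduced_form_def cdot_axis bilin_free_of_y2 cdot_2
      block13_def y13_def mult_vec_2 mult.assoc)

lemma act_reduced_form:
  "act A (embed13 Y) (reduced_form \<mu> T1 T2)
     = reduced_form \<mu> (transpose A ** T1 ** Y) (transpose A ** T2 ** Y)"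
proof -
  have "cdot (A *v x) u = cdot x (transpose A *v u)" for x u
    by (metis cdot_commute cdot_mult_vec)
  then have "cdot (A *v x) (T *v (Y *v v)) = cdot x ((transpose A ** T ** Y) *v v)" for x T v
    by (simp only: matrix_vector_mul_assoc matrix_mul_assoc)
  then show ?thesis
    by (simp add: fun_eq_iff act_def reduced_form_def y13_embed13 embed13_nth_2)
qed

lemma model_form_reduced:
  "model_form al be ga de = reduced_form 1 (antidiag al be) (antidiag ga de)"
  by (simp add: fun_eq_iff model_form_def reduced_form_def antidiag_def cdot_2 mult_vec_2 y13_def
      algebra_simps)

lemma reduced_form_commute: "reduced_form \<mu> T2 T1 = reduced_form \<mu> T1 T2"
  by (simp add: reduced_form_def fun_eq_iff mult_ac)

lemma mixed_det_expand:
  "mixed_det T1 T2 = T1$1$1 * T2$2$2 + T2$1$1 * T1$2$2 - T1$1$2 * T2$2$1 - T2$1$2 * T1$2$1"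
  by (simp add: mixed_det_def det_2 algebra_simps)

lemma mixed_det_commute: "mixed_det T2 T1 = mixed_det T1 T2"
  by (simp add: mixed_det_def add.commute)

lemma matrix_add_rdistrib: "((B + C) ** A) = (B ** A) + (C ** A)"
  by (simp add: vec_eq_iff matrix_matrix_mult_def sum.distrib distrib_right)

lemma mixed_det_mult:
  "mixed_det (transpose A ** T1 ** Y) (transpose A ** T2 ** Y) = det A * det Y * mixed_det T1 T2"
proof -
  have "transpose A ** T1 ** Y + transpose A ** T2 ** Y = transpose A ** (T1 + T2) ** Y"
    by (simp add: matrix_add_ldistrib matrix_add_rdistrib)
  then show ?thesis by (simp add: mixed_det_def det_mul det_transpose algebra_simps)
qed

lemma pencil_relation_block13:
  assumes "pencil_relation al be ga de P1 P2" "free_of_y2 P1" "free_of_y2 P2"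
  shows "al*be*ga*de * (mixed_det (block13 P1) (block13 P2))^2
           = (al*de + be*ga)^2 * det (block13 P1) * det (block13 P2)"
    and "al*be = 0 \<Longrightarrow> det (block13 P1) = 0" and "ga*de = 0 \<Longrightarrow> det (block13 P2) = 0"
proof -
  have cross: "row_cross P $ 2 = - det (block13 P)" if "free_of_y2 P" for P
    using that by (simp add: row_cross_def block13_def det_2 free_of_y2_def)
  have polar: "row_cross_polar P1 P2 $ 2 = - mixed_det (block13 P1) (block13 P2)"
    using assms(2,3) by (simp add: row_cross_polar_def mixed_det_expand block13_def free_of_y2_def)
  show "al*be*ga*de * (mixed_det (block13 P1) (block13 P2))^2
          = (al*de + be*ga)^2 * det (block13 P1) * det (block13 P2)"
  proof -
    have "al*be*ga*de * row_cross_polar P1 P2 $ 2 * row_cross_polar P1 P2 $ 2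
            = (al*de + be*ga)^2 * row_cross P1 $ 2 * row_cross P2 $ 2"
      using assms(1) unfolding pencil_relation_def by blast
    then show ?thesis
      unfolding polar cross[OF assms(2)] cross[OF assms(3)]
      by (simp add: power2_eq_square mult.assoc)
  qed
  show "det (block13 P1) = 0" if "al*be = 0"
    using assms(1) that cross[OF assms(2)] unfolding pencil_relation_def by simp
  show "det (block13 P2) = 0" if "ga*de = 0"
    using assms(1) that cross[OF assms(3)] unfolding pencil_relation_def by simp
qed

definition diag2 :: "complex \<Rightarrow> complex \<Rightarrow> complex^2^2" where
  "diag2 a b = vector [vector [a, 0], vector [0, b]]"

definition adjugate2 :: "complex^2^2 \<Rightarrow> complex^2^2" where
  "adjugate2 T = vector [vector [T$2$2, - T$1$2], vector [- T$2$1, T$1$1]]"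

lemma rank_one_if_det2_eq_0:
  fixes T :: "complex^2^2"
  assumes "det T = 0"
  obtains u v where "T = (\<chi> i j. u$i * v$j)"
proof -
  consider "T$1$1 \<noteq> 0" | "T$1$1 = 0" "T$1$2 \<noteq> 0" | "T$1$1 = 0" "T$1$2 = 0" by blast
  then show ?thesis
  proof cases
    case 1
    with assms have "T$2$2 = T$2$1 / T$1$1 * T$1$2" by (simp add: det_2 field_simps)
    with 1 show ?thesis
      by (intro that[of "vector [1, T$2$1 / T$1$1]" "vector [T$1$1, T$1$2]"])
        (simp add: vec_eq_iff forall_2)
  next
    case 2
    with assms have "T$2$1 = 0" by (simp add: det_2)
    with 2 show ?thesis
      by (intro that[of "vector [1, T$2$2 / T$1$2]" "vector [0, T$1$2]"])
        (simp add: vec_eq_iff forall_2)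
  next
    case 3
    then show ?thesis
      by (intro that[of "vector [0, 1]" "vector [T$2$1, T$2$2]"]) (simp add: vec_eq_iff forall_2)
  qed
qed

lemma cdot_rank_one: "cdot x ((\<chi> i j. u$i * v$j) *v z) = cdot x u * cdot v z"
  by (simp add: cdot_def matrix_vector_mult_def sum_distrib_left sum_distrib_right mult_ac)
    (rule sum.swap)

lemma rank_one_mult:
  "transpose A ** (\<chi> i j. u$i * v$j) ** Y = (\<chi> i j. (transpose A *v u)$i * (transpose Y *v v)$j)"
  for A Y :: "complex^2^2"
  by (simp add: vec_eq_iff forall_2 matrix_matrix_mult_def matrix_vector_mult_def sum_2
      transpose_def algebra_simps)

lemma SL2_transpose_maps_to_axis:
  assumes "(u::complex^2) \<noteq> 0"
  obtains A where "det A = 1" "transpose A *v u = axis k 1"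
proof -
  obtain M where M: "det M = 1" "M *v u = axis 1 1"
  proof (cases "u$1 = 0")
    case True
    with assms have "u$2 \<noteq> 0" by (auto simp: vec_eq_iff forall_2)
    with True show ?thesis
      by (intro that[of "vector [vector [0, 1 / u$2], vector [- u$2, 0]]"])
        (simp_all add: det_2 vec_eq_iff forall_2 mult_vec_2 axis_def)
  next
    case False
    then show ?thesis
      by (intro that[of "vector [vector [1 / u$1, 0], vector [- u$2, u$1]]"])
        (simp_all add: det_2 vec_eq_iff forall_2 mult_vec_2 axis_def)
  qed
  let ?R = "vector [vector [0, -1], vector [1, 0]] :: complex^2^2"
  have "?R *v axis 1 1 = axis 2 1" "det ?R = 1"
    by (simp_all add: det_2 vec_eq_iff forall_2 mult_vec_2 axis_def)
  then have "det (transpose (?R ** M)) = 1" "transpose (transpose (?R ** M)) *v u = axis 2 1"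
    using M by (simp_all add: det_transpose det_mul matrix_vector_mul_assoc[symmetric])
  moreover have "det (transpose M) = 1" "transpose (transpose M) *v u = axis 1 1"
    using M by (simp_all add: det_transpose)
  ultimately show ?thesis using that exhaust_2[of k] by metis
qed

lemma in_nullcone_reduced_form_triangular:
  assumes "T2$2$1 = 0"
  shows "in_nullcone (reduced_form \<mu> (antidiag 0 1) T2)"
proof -
  define k where "k n = (of_nat (Suc n) :: complex)" for n
  have k: "k n \<noteq> 0" for n unfolding k_def by (simp del: of_nat_Suc)
  let ?F = "reduced_form \<mu> (antidiag 0 1) T2"
  show ?thesis
  proof (rule in_nullconeI)
    show "det (diag2 (1 / k n) (k n)) = 1" "det (embed13 (diag2 (k n) (1 / k n))) = 1" for n
      using k[of n] by (simp_all add: diag2_def det_2 det_embed13)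
    fix x :: "complex^2" and y :: "complex^3"
    define c2 where "c2 = \<mu> * y$2 * x$1 * y$3 * (T2$1$1 * x$1 * y$1 + T2$2$2 * x$2 * y$3)"
    define c4 where "c4 = \<mu> * y$2 * x$1 * y$3 * T2$1$2 * x$1 * y$3"
    have "?F (diag2 (1 / k n) (k n) *v x) (embed13 (diag2 (k n) (1 / k n)) *v y)
            = (1 / k n)^2 * c2 + (1 / k n)^4 * c4" for n
      using assms k[of n]
      by (simp add: reduced_form_def antidiag_def diag2_def embed13_def y13_def cdot_2 mult_vec_2
          mult_vec_3 c2_def c4_def power2_eq_square power4_eq_xxxx field_simps)
    moreover have "(\<lambda>n. (1 / k n)^2 * c2 + (1 / k n)^4 * c4) \<longlonglongrightarrow> 0^2 * c2 + 0^4 * c4"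
      unfolding k_def by (intro tendsto_intros lim_inverse_Suc)
    ultimately show "(\<lambda>n. ?F (diag2 (1 / k n) (k n) *v x) (embed13 (diag2 (k n) (1 / k n)) *v y))
                       \<longlonglongrightarrow> 0"
      by simp
  qed
qed

text \<open>A singular T1 is of rank one, so coordinates can be chosen with l1 = x1 y3; the vanishing
  mixed determinant then removes the monomial x2 y1 from l2, and the one-parameter subgroup of
  in_nullcone_reduced_form_triangular applies.\<close>

lemma in_nullcone_reduced_form_degenerate:
  assumes "det T1 = 0" "mixed_det T1 T2 = 0"
  shows "in_nullcone (reduced_form \<mu> T1 T2)"
proof -
  obtain u v where T1: "T1 = (\<chi> i j. u$i * v$j)" using rank_one_if_det2_eq_0 assms(1) by blast
  show ?thesis
  proof (cases "u = 0 \<or> v = 0")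
    case True
    then have "reduced_form \<mu> T1 T2 = (\<lambda>x y. 0)"
      unfolding reduced_form_def T1 cdot_rank_one by (auto simp: fun_eq_iff cdot_def)
    then show ?thesis using in_nullcone_zero by simp
  next
    case False
    obtain A where A: "det A = 1" "transpose A *v u = axis 1 1"
      using SL2_transpose_maps_to_axis False by blast
    obtain Y where Y: "det Y = 1" "transpose Y *v v = axis 2 1"
      using SL2_transpose_maps_to_axis False by blast
    have T1': "transpose A ** T1 ** Y = antidiag 0 1"
      unfolding T1 rank_one_mult A Y by (simp add: vec_eq_iff forall_2 antidiag_def axis_def)
    have "mixed_det (antidiag 0 1) (transpose A ** T2 ** Y) = 0"
      using mixed_det_mult[of A T1 Y T2] assms(2) by (simp add: T1')
    then have "in_nullcone (reduced_form \<mu> (antidiag 0 1) (transpose A ** T2 ** Y))"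
      by (intro in_nullcone_reduced_form_triangular) (simp add: mixed_det_expand antidiag_def)
    then have "in_nullcone (act A (embed13 Y) (reduced_form \<mu> T1 T2))"
      by (simp add: act_reduced_form T1')
    then show ?thesis using not_in_nullcone_act A Y by (metis det_embed13)
  qed
qed

lemma reduced_form_in_cone_orbitI:
  assumes "det A \<noteq> 0" "det Y \<noteq> 0" "\<mu> \<noteq> 0" "c \<noteq> 0"
    and K1: "transpose A ** antidiag al be ** Y = T1"
    and K2: "transpose A ** antidiag ga de ** Y = mat c ** T2"
  shows "reduced_form \<mu> T1 T2 \<in> cone_orbit (model_form al be ga de)"
proof -
  have "cdot x ((mat c ** T2) *v z) = c * cdot x (T2 *v z)" for x z :: "complex^2"
    by (simp add: cdot_2 mult_vec_2 matrix_matrix_mult_def mat_def sum_2 algebra_simps)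
  then have "reduced_form 1 T1 (mat c ** T2) = (\<lambda>x y. c / \<mu> * reduced_form \<mu> T1 T2 x y)"
    using assms(3) by (simp add: fun_eq_iff reduced_form_def)
  moreover have "act A (embed13 Y) (model_form al be ga de) = reduced_form 1 T1 (mat c ** T2)"
    by (simp only: model_form_reduced act_reduced_form K1 K2)
  ultimately have "reduced_form \<mu> T1 T2
                     = (\<lambda>x y. \<mu> / c * act A (embed13 Y) (model_form al be ga de) x y)"
    using assms(3,4) by (simp add: fun_eq_iff)
  also have "\<dots> \<in> cone_orbit (model_form al be ga de)"
    using assms(1-4)
    by (intro scaled_act_in_cone_orbit model_form_homogeneous) (simp_all add: det_embed13)
  finally show ?thesis .
qed

lemma reduced_form_in_cone_orbit_rank_one:
  assumes "det T1 = 0" "det T2 = 0" "mixed_det T1 T2 \<noteq> 0" "\<mu> \<noteq> 0"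
  shows "reduced_form \<mu> T1 T2 \<in> cone_orbit (model_form 1 0 0 1)"
proof -
  obtain u v where T1: "T1 = (\<chi> i j. u$i * v$j)" using rank_one_if_det2_eq_0 assms(1) by blast
  obtain w z where T2: "T2 = (\<chi> i j. w$i * z$j)" using rank_one_if_det2_eq_0 assms(2) by blast
  let ?A = "vector [w, u] :: complex^2^2" and ?Y = "vector [v, z] :: complex^2^2"
  have "mixed_det T1 T2 = - det ?A * det ?Y"
    by (simp add: T1 T2 mixed_det_expand det_2 algebra_simps)
  then have "det ?A \<noteq> 0" "det ?Y \<noteq> 0" using assms(3) by auto
  moreover have "transpose ?A ** antidiag 1 0 ** ?Y = T1" "transpose ?A ** antidiag 0 1 ** ?Y = T2"
    by (simp_all add: T1 T2 vec_eq_iff forall_2 matrix_matrix_mult_def sum_2 transpose_def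
        antidiag_def)
  ultimately show ?thesis
    using assms(4) reduced_form_in_cone_orbitI[where c = 1] by simp
qed

lemma T_mult_adjugate2: "T ** adjugate2 T = mat (det T)"
  by (simp add: vec_eq_iff forall_2 matrix_matrix_mult_def sum_2 adjugate2_def det_2 mat_def)

lemma det_adjugate2: "det (adjugate2 T) = det T"
  by (simp add: adjugate2_def det_2 algebra_simps)

lemma trace_adjugate2_mult: "(adjugate2 T1 ** T2)$1$1 + (adjugate2 T1 ** T2)$2$2 = mixed_det T1 T2"
  by (simp add: adjugate2_def matrix_matrix_mult_def sum_2 mixed_det_expand algebra_simps)

lemma diagonalize2:
  fixes M :: "complex^2^2"
  assumes ne: "l1 \<noteq> l2" and tr: "M$1$1 + M$2$2 = l1 + l2" and dt: "det M = l1 * l2"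
  obtains S where "det S \<noteq> 0" "M ** S = S ** diag2 l1 l2"
proof -
  have char: "l^2 = (M$1$1 + M$2$2) * l - det M" if "l = l1 \<or> l = l2" for l
    using that tr dt by (auto simp: power2_eq_square algebra_simps)
  have "(l1 - M$1$1) * (l1 - M$2$2) = M$1$2 * M$2$1"
    using char[of l1] by (simp add: det_2 power2_eq_square algebra_simps)
  then consider "M$1$2 \<noteq> 0" | "M$1$2 = 0" "l1 = M$1$1" | "M$1$2 = 0" "l1 = M$2$2"
    by (cases "M$1$2 = 0") auto
  then show ?thesis
  proof cases
    case 1
    let ?S = "vector [vector [M$1$2, M$1$2], vector [l1 - M$1$1, l2 - M$1$1]] :: complex^2^2"
    have "det ?S = M$1$2 * (l2 - l1)" by (simp add: det_2 algebra_simps)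
    then have "det ?S \<noteq> 0" using 1 ne by simp
    moreover have "M ** ?S = ?S ** diag2 l1 l2"
      using char[of l1] char[of l2]
      by (simp add: vec_eq_iff forall_2 matrix_matrix_mult_def sum_2 diag2_def det_2
          power2_eq_square algebra_simps)
    ultimately show ?thesis by (rule that)
  next
    case 2
    with tr have "l2 = M$2$2" by simp
    let ?S = "vector [vector [l1 - l2, 0], vector [M$2$1, 1]] :: complex^2^2"
    have "det ?S \<noteq> 0" using ne by (simp add: det_2)
    moreover have "M ** ?S = ?S ** diag2 l1 l2"
      using 2 \<open>l2 = M$2$2\<close>
      by (simp add: vec_eq_iff forall_2 matrix_matrix_mult_def sum_2 diag2_def algebra_simps)
    ultimately show ?thesis by (rule that)
  next
    case 3
    with tr have "l2 = M$1$1" by simp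
    let ?S = "vector [vector [0, l2 - l1], vector [1, M$2$1]] :: complex^2^2"
    have "det ?S \<noteq> 0" using ne by (simp add: det_2)
    moreover have "M ** ?S = ?S ** diag2 l1 l2"
      using 3 \<open>l2 = M$1$1\<close>
      by (simp add: vec_eq_iff forall_2 matrix_matrix_mult_def sum_2 diag2_def algebra_simps)
    ultimately show ?thesis by (rule that)
  qed
qed

lemma mat_mult_commute: "mat k ** (T::complex^2^2) = T ** mat k"
  by (simp add: vec_eq_iff forall_2 matrix_matrix_mult_def mat_def sum_2 mult.commute)

lemma mat_mult_mat: "mat a ** (mat b :: complex^2^2) = mat (a * b)"
  by (simp add: vec_eq_iff forall_2 matrix_matrix_mult_def mat_def sum_2)

lemma det_mat2: "det (mat k :: complex^2^2) = k^2"
  by (simp add: det_2 mat_def power2_eq_square)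

lemma trace_mat_mult:
  "(mat k ** T)$1$1 + (mat k ** T)$2$2 = k * (T$1$1 + T$2$2)" for T :: "complex^2^2"
  by (simp add: matrix_matrix_mult_def mat_def sum_2 algebra_simps)

text \<open>Since (antidiag al be)^-1 ** antidiag ga de = diag2 (ga/al) (de/be), the relation between
  mixed_det T1 T2, det T1 and det T2 says exactly that a multiple of adjugate2 T1 ** T2, i.e. of
  T1^-1 ** T2, has the same trace and determinant as this diagonal matrix, hence is conjugate to it.
  This yields a simultaneous normal form of the pair (T1, T2).\<close>

lemma adjugate2_mult_conjugate_diag2:
  assumes nz: "al*be*ga*de \<noteq> 0" and plus: "al*de + be*ga \<noteq> 0" and minus: "al*de - be*ga \<noteq> 0"
    and T1: "det T1 \<noteq> 0" and T2: "det T2 \<noteq> 0"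
    and rel: "al*be*ga*de * (mixed_det T1 T2)^2 = (al*de + be*ga)^2 * det T1 * det T2"
  obtains k S where "k \<noteq> 0" "det S \<noteq> 0"
    "mat k ** (adjugate2 T1 ** T2) ** S = S ** diag2 (ga/al) (de/be)"
proof -
  have nz': "al \<noteq> 0" "be \<noteq> 0" "ga \<noteq> 0" "de \<noteq> 0" using nz by auto
  have mixed: "mixed_det T1 T2 \<noteq> 0" using rel plus T1 T2 by auto
  define k where "k = (al*de + be*ga) / (al*be * mixed_det T1 T2)"
  define M where "M = mat k ** (adjugate2 T1 ** T2)"
  have "ga/al \<noteq> de/be" using minus nz' by (simp add: field_simps)
  moreover have "M$1$1 + M$2$2 = ga/al + de/be"
    using nz' mixed by (simp add: M_def trace_mat_mult trace_adjugate2_mult k_def field_simps)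
  moreover have "det M = ga/al * (de/be)"
  proof -
    have "det M = k^2 * det T1 * det T2" by (simp add: M_def det_mul det_mat2 det_adjugate2)
    also have "\<dots> = (al*de + be*ga)^2 * det T1 * det T2 / (al*be * mixed_det T1 T2)^2"
      by (simp add: k_def power_divide)
    also have "\<dots> = al*be*ga*de * (mixed_det T1 T2)^2 / (al*be * mixed_det T1 T2)^2"
      by (simp only: rel)
    also have "\<dots> = ga/al * (de/be)"
      using nz' mixed by (simp add: power2_eq_square field_simps)
    finally show ?thesis .
  qed
  ultimately obtain S where "det S \<noteq> 0" "M ** S = S ** diag2 (ga/al) (de/be)"
    using diagonalize2 by blast
  moreover have "k \<noteq> 0" using plus nz' mixed by (simp add: k_def)
  ultimately show ?thesis using that unfolding M_def by blast
qed

lemma reduced_form_in_cone_orbit_generic: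
  assumes nz: "al*be*ga*de \<noteq> 0" and "al*de + be*ga \<noteq> 0" "al*de - be*ga \<noteq> 0"
    and "\<mu> \<noteq> 0" and T1: "det T1 \<noteq> 0" and "det T2 \<noteq> 0"
    and "al*be*ga*de * (mixed_det T1 T2)^2 = (al*de + be*ga)^2 * det T1 * det T2"
  shows "reduced_form \<mu> T1 T2 \<in> cone_orbit (model_form al be ga de)"
proof -
  obtain k S where k: "k \<noteq> 0" and S: "det S \<noteq> 0"
    "mat k ** (adjugate2 T1 ** T2) ** S = S ** diag2 (ga/al) (de/be)"
    using adjugate2_mult_conjugate_diag2 assms(1-3,5-7) by blast
  obtain S' where S': "S ** S' = mat 1"
    using S(1) invertible_det_nz invertible_right_inverse by blast
  then have "det S' \<noteq> 0" by (metis det_I det_mul mult_zero_right zero_neq_one)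
  let ?K = "antidiag (1/be) (1/al)"
  have K1: "?K ** antidiag al be = mat 1" and K2: "?K ** antidiag ga de = diag2 (ga/al) (de/be)"
    using nz by (simp_all add: vec_eq_iff forall_2 matrix_matrix_mult_def sum_2 antidiag_def
        diag2_def mat_def)
  let ?A = "transpose (T1 ** S ** ?K)"
  have "det ?K \<noteq> 0" using nz by (simp add: antidiag_def det_2)
  then have "det ?A \<noteq> 0" using T1 S(1) by (simp add: det_transpose det_mul)
  moreover have "transpose ?A ** antidiag al be ** S' = T1"
    by (simp add: matrix_mul_assoc[symmetric] K1) (simp add: matrix_mul_assoc S')
  moreover have "transpose ?A ** antidiag ga de ** S' = mat (k * det T1) ** T2"
  proof -
    have "transpose ?A ** antidiag ga de ** S' = T1 ** (S ** diag2 (ga/al) (de/be)) ** S'"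
      by (simp add: matrix_mul_assoc[symmetric] K2)
    also have "\<dots> = T1 ** (mat k ** (adjugate2 T1 ** T2))"
      by (simp add: S(2)[symmetric] matrix_mul_assoc[symmetric] S')
    also have "\<dots> = mat k ** (T1 ** adjugate2 T1) ** T2"
      by (simp only: matrix_mul_assoc mat_mult_commute[of k T1])
    also have "\<dots> = mat (k * det T1) ** T2" by (simp add: T_mult_adjugate2 mat_mult_mat)
    finally show ?thesis .
  qed
  moreover have "k * det T1 \<noteq> 0" using k T1 by simp
  ultimately show ?thesis using \<open>\<mu> \<noteq> 0\<close> \<open>det S' \<noteq> 0\<close> by (intro reduced_form_in_cone_orbitI)
qed

subsection \<open>Closedness of the orbit\<close>

lemma closed_orbit_model_formI:
  assumes nd: "al*de - be*ga \<noteq> 0"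
    and reduced: "\<And>\<mu> T1 T2. \<mu> \<noteq> 0 \<Longrightarrow> \<not> in_nullcone (reduced_form \<mu> T1 T2) \<Longrightarrow>
        al*be*ga*de * (mixed_det T1 T2)^2 = (al*de + be*ga)^2 * det T1 * det T2 \<Longrightarrow>
        (al*be = 0 \<Longrightarrow> det T1 = 0) \<Longrightarrow> (ga*de = 0 \<Longrightarrow> det T2 = 0) \<Longrightarrow>
        reduced_form \<mu> T1 T2 \<in> cone_orbit (model_form al be ga de)"
  shows "closed_orbit (model_form al be ga de)"
  unfolding closed_orbit_def
proof (intro allI impI, elim conjE)
  fix H assume "semistable H" and cl: "in_closure H (cone_orbit (model_form al be ga de))"
  then have H: "\<not> in_nullcone H" "H \<noteq> (\<lambda>x y. 0)" by (simp_all add: semistable_iff)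
  obtain \<mu> m N1 N2 w where w: "w \<noteq> 0" "N1 *v w = 0" "N2 *v w = 0"
    and rel0: "pencil_relation al be ga de N1 N2" and Hf: "H = factored_form \<mu> m N1 N2"
    by (rule closure_cone_orbit_model_form[OF nd cl])
  have "\<mu> \<noteq> 0" using H(2) by (auto simp: Hf factored_form_def fun_eq_iff)
  obtain B P1 P2 where B: "det B = 1" and P: "free_of_y2 P1" "free_of_y2 P2"
    and rel: "pencil_relation al be ga de P1 P2"
    and "act (mat 1) B (factored_form \<mu> m N1 N2) = factored_form \<mu> (axis 2 1) P1 P2"
    using H(1) unfolding Hf by (rule reduce_factored_form[OF w rel0])
  then have act: "act (mat 1) B H = reduced_form \<mu> (block13 P1) (block13 P2)"
    by (simp add: Hf factored_form_axis2)
  have "\<not> in_nullcone (reduced_form \<mu> (block13 P1) (block13 P2))"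
    using not_in_nullcone_act[OF H(1) _ B] act by (metis det_I)
  then have "act (mat 1) B H \<in> cone_orbit (model_form al be ga de)"
    unfolding act using \<open>\<mu> \<noteq> 0\<close> pencil_relation_block13[OF rel P] by (intro reduced) simp_all
  then show "H \<in> cone_orbit (model_form al be ga de)" using act_in_cone_orbit_iff B by force
qed

subsection \<open>The forms of type (tau) and (tau')\<close>

lemma model_form_eq_tau: "model_form al be ga de = tau (al*ga) (al*de + be*ga) (be*de)"
  by (simp add: fun_eq_iff model_form_def tau_def power2_eq_square algebra_simps)

lemma tau'_eq_model_form: "tau' = model_form 1 0 0 1"
  by (simp add: fun_eq_iff tau'_def model_form_def algebra_simps)

lemma form23_tau: "form23 (tau a1 a2 a3)"
proof -
  define c where "c i a b = (if (i, a, b) = (0, 2, 1) then a1 else if (i, a, b) = (1, 1, 1) then a2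
      else if (i, a, b) = (2, 0, 1) then a3 else 0)" for i a b :: nat
  have "tau a1 a2 a3 = (\<lambda>x y. \<Sum>i\<le>2. \<Sum>a\<le>3. \<Sum>b\<le>3 - a.
            c i a b * x$1 ^ i * x$2 ^ (2 - i) * y$1 ^ a * y$2 ^ b * y$3 ^ (3 - a - b))"
    by (simp add: fun_eq_iff tau_def c_def eval_nat_numeral atMost_Suc algebra_simps)
  then show ?thesis unfolding form23_def by blast
qed

lemma semistable_model_form:
  assumes "al*de - be*ga \<noteq> 0"
  shows "semistable (model_form al be ga de)"
  using not_in_nullcone_model_form[OF assms] in_nullcone_zero
  by (auto simp: semistable_iff model_form_eq_tau form23_tau)

lemma closed_orbit_model_form_generic:
  assumes "al*be*ga*de \<noteq> 0" "al*de + be*ga \<noteq> 0" "al*de - be*ga \<noteq> 0"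
  shows "closed_orbit (model_form al be ga de)"
proof (rule closed_orbit_model_formI[OF assms(3)])
  fix \<mu> T1 T2
  assume "\<mu> \<noteq> 0" and ss: "\<not> in_nullcone (reduced_form \<mu> T1 T2)"
    and rel: "al*be*ga*de * (mixed_det T1 T2)^2 = (al*de + be*ga)^2 * det T1 * det T2"
  have "det T1 \<noteq> 0 \<and> det T2 \<noteq> 0"
  proof (rule ccontr)
    assume "\<not> (det T1 \<noteq> 0 \<and> det T2 \<noteq> 0)"
    moreover from this have "mixed_det T1 T2 = 0" using rel assms(1) by auto
    ultimately show False
      using ss in_nullcone_reduced_form_degenerate[of T1 T2 \<mu>]
        in_nullcone_reduced_form_degenerate[of T2 T1 \<mu>]
      by (auto simp: mixed_det_commute reduced_form_commute)
  qed
  then show "reduced_form \<mu> T1 T2 \<in> cone_orbit (model_form al be ga de)"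
    using reduced_form_in_cone_orbit_generic assms \<open>\<mu> \<noteq> 0\<close> rel by blast
qed

lemma closed_orbit_tau': "closed_orbit tau'"
  unfolding tau'_eq_model_form
proof (rule closed_orbit_model_formI)
  fix \<mu> T1 T2
  assume "\<mu> \<noteq> 0" and ss: "\<not> in_nullcone (reduced_form \<mu> T1 T2)"
    and "1*0 = (0::complex) \<Longrightarrow> det T1 = 0" "0*1 = (0::complex) \<Longrightarrow> det T2 = 0"
  then have "det T1 = 0" "det T2 = 0" by simp_all
  moreover from this have "mixed_det T1 T2 \<noteq> 0"
    using ss in_nullcone_reduced_form_degenerate by blast
  ultimately show "reduced_form \<mu> T1 T2 \<in> cone_orbit (model_form 1 0 0 1)"
    using reduced_form_in_cone_orbit_rank_one \<open>\<mu> \<noteq> 0\<close> by blast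
qed simp

lemma tau_factorization:
  assumes "a1 \<noteq> 0"
  obtains b d where "tau a1 a2 a3 = model_form 1 b a1 d" "b*d = a3" "d + b*a1 = a2"
    "(d - b*a1)^2 = a2^2 - 4*a1*a3"
proof
  define s where "s = csqrt (a2^2 - 4*a1*a3)"
  have s: "s^2 = a2^2 - 4*a1*a3" by (simp add: s_def)
  show prod_eq: "(a2 + s) / (2*a1) * ((a2 - s) / 2) = a3"
    using assms s by (simp add: field_simps power2_eq_square)
  show sum_eq: "(a2 - s) / 2 + (a2 + s) / (2*a1) * a1 = a2"
    using assms by (simp add: field_simps)
  show "((a2 - s) / 2 - (a2 + s) / (2*a1) * a1)^2 = a2^2 - 4*a1*a3"
    using assms s by (simp add: field_simps power2_eq_square)
  show "tau a1 a2 a3 = model_form 1 ((a2 + s) / (2*a1)) a1 ((a2 - s) / 2)"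
    unfolding model_form_eq_tau using prod_eq sum_eq by (simp add: algebra_simps)
qed

lemma generic3_if_discriminant:
  assumes "\<And>a1 a2 a3. a1 * a2 * a3 * (a2^2 - 4*a1*a3) \<noteq> 0 \<Longrightarrow> P a1 a2 a3"
  shows "generic3 P"
proof -
  define p where "p i j k =
    (if (i, j, k) = (1, 3, 1) then 1 else if (i, j, k) = (2, 1, 2) then -4 else 0 :: complex)"
    for i j k :: nat
  have "(\<Sum>i\<le>3. \<Sum>j\<le>3. \<Sum>k\<le>3. p i j k * a1 ^ i * a2 ^ j * a3 ^ k)
          = a1 * a2 * a3 * (a2^2 - 4*a1*a3)" for a1 a2 a3 :: complex
    by (simp add: p_def eval_nat_numeral atMost_Suc algebra_simps)
  moreover have "p 1 3 1 \<noteq> 0" "\<forall>i j k. p i j k \<noteq> 0 \<longrightarrow> i \<le> 3 \<and> j \<le> 3 \<and> k \<le> 3"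
    by (simp_all add: p_def)
  ultimately show ?thesis
    unfolding generic3_def using assms by (intro exI[of _ p] exI[of _ "3::nat"]) auto
qed

theorem lemma5p3:
  shows "generic3 (\<lambda>a1 a2 a3. semistable (tau a1 a2 a3) \<and> closed_orbit (tau a1 a2 a3))
         \<and> semistable tau' \<and> closed_orbit tau'"
proof (intro conjI generic3_if_discriminant)
  fix a1 a2 a3 :: complex
  assume nz: "a1 * a2 * a3 * (a2^2 - 4*a1*a3) \<noteq> 0"
  then obtain b d where tau: "tau a1 a2 a3 = model_form 1 b a1 d"
    and "b*d = a3" "d + b*a1 = a2" "(d - b*a1)^2 = a2^2 - 4*a1*a3"
    using tau_factorization by (metis mult_zero_left)
  then have "1*b*a1*d \<noteq> 0" "1*d + b*a1 \<noteq> 0" "1*d - b*a1 \<noteq> 0"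
    using nz by (auto simp: mult_ac)
  then show "semistable (tau a1 a2 a3)" "closed_orbit (tau a1 a2 a3)"
    unfolding tau by (simp_all add: semistable_model_form closed_orbit_model_form_generic)
next
  show "semistable tau'" by (simp add: tau'_eq_model_form semistable_model_form)
  show "closed_orbit tau'" by (rule closed_orbit_tau')
qed

end
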